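(* Let $S$, $S'$ be Polish spaces, $(X_n)$, $(Y_n)$ sequences of $S$-valued random variables, and $g_n:S\to S'$ continuous functions. If $X_n//Y_n\to1$, then $g_n(X_n)//g_n(Y_n)\to1$.
   Context: For a random variable $X$, $\mathbb{P}_X$ denotes its law. Write $X_n//Y_n\to1$ if for each $n$, $\mathbb{P}_{X_n}$ is absolutely continuous with respect to $\mathbb{P}_{Y_n}$ with a density $f_n\ge0$ ($\mathbb{P}_{X_n}=f_n\mathbb{P}_{Y_n}$), and for every $\varepsilon>0$, $\mathbb{P}_{Y_n}(\{x:|f_n(x)-1|<\varepsilon\})\to1$ as $n\to\infty$. *)

theory Defs
  imports "HOL-Probability.Probability"
begin

definition dens_conv_one :: "(nat \<Rightarrow> 'a measure) \<Rightarrow> (nat \<Rightarrow> 'a measure) \<Rightarrow> bool" where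
  "dens_conv_one P Q \<longleftrightarrow>
     (\<exists>f :: nat \<Rightarrow> 'a \<Rightarrow> real.
        (\<forall>n. f n \<in> borel_measurable (Q n) \<and> (\<forall>x \<in> space (Q n). f n x \<ge> 0)
             \<and> P n = density (Q n) (\<lambda>x. ennreal (f n x)))
      \<and> (\<forall>\<epsilon>>0. (\<lambda>n. measure (Q n) {x \<in> space (Q n). \<bar>f n x - 1\<bar> < \<epsilon>}) \<longlonglongrightarrow> 1))"

definition ratio_conv_one ::
  "(nat \<Rightarrow> 'w1 measure) \<Rightarrow> (nat \<Rightarrow> 'w1 \<Rightarrow> 'a::topological_space)
   \<Rightarrow> (nat \<Rightarrow> 'w2 measure) \<Rightarrow> (nat \<Rightarrow> 'w2 \<Rightarrow> 'a) \<Rightarrow> bool" where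
  "ratio_conv_one M X N Y \<longleftrightarrow>
     dens_conv_one (\<lambda>n. distr (M n) borel (X n)) (\<lambda>n. distr (N n) borel (Y n))"

end

theory Submission imports Defs begin

text \<open>Let \<open>f\<close> be the density of \<open>P = law(X\<^sub>n)\<close> with respect to \<open>Q = law(Y\<^sub>n)\<close>. Since
  \<open>P \<ge> (1 - d) Q\<close> on \<open>{|f - 1| < d}\<close>, every event \<open>C\<close> satisfies
  \<open>|P C - Q C| \<le> d + Q {|f - 1| \<ge> d}\<close>, and this bound passes to the image laws under \<open>g\<^sub>n\<close>.
  If \<open>h\<close> is the density of the image of \<open>P\<close> with respect to the image of \<open>Q\<close>, the events
  \<open>{h \<ge> 1 + e}\<close> and \<open>{h \<le> 1 - e}\<close> have a discrepancy of at least \<open>e\<close> times their measure,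
  so their total measure is at most \<open>2 (d + Q {|f - 1| \<ge> d}) / e\<close>, which is eventually small.\<close>

lemma real_density_if_absolutely_continuous:
  assumes Q: "sigma_finite_measure Q" and P: "sigma_finite_measure P"
    and sets_eq: "sets P = sets Q" and ac: "absolutely_continuous Q P"
  shows "\<exists>h \<in> borel_measurable Q. (\<forall>x\<in>space Q. 0 \<le> h x) \<and> P = density Q (\<lambda>x. ennreal (h x))"
proof -
  interpret Q: sigma_finite_measure Q by fact
  let ?h = "\<lambda>x. enn2real (RN_deriv Q P x)"
  have finite: "AE x in Q. RN_deriv Q P x \<noteq> \<infinity>"
    by (rule Q.RN_deriv_finite[OF P ac sets_eq])
  have "P = density Q (RN_deriv Q P)"
    using Q.density_RN_deriv[OF ac sets_eq] by simp
  also have "\<dots> = density Q (\<lambda>x. ennreal (?h x))"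
    by (rule density_cong) (use finite in \<open>auto elim!: AE_mp simp: less_top\<close>)
  finally show ?thesis by (intro bexI[of _ ?h]) auto
qed

lemma absolutely_continuous_distr:
  assumes ac: "absolutely_continuous M N" and sets_eq: "sets N = sets M"
    and g: "g \<in> measurable M M'"
  shows "absolutely_continuous (distr M M' g) (distr N M' g)"
  unfolding absolutely_continuous_def
proof
  fix A assume "A \<in> null_sets (distr M M' g)"
  then have A: "A \<in> sets M'" and "g -` A \<inter> space M \<in> null_sets M"
    using g by (auto simp: null_sets_distr_iff)
  then have "g -` A \<inter> space N \<in> null_sets N"
    using ac sets_eq_imp_space_eq[OF sets_eq] by (auto simp: absolutely_continuous_def)
  moreover have "g \<in> measurable N M'"
    using g measurable_cong_sets[OF sets_eq refl] by blast
  ultimately show "A \<in> null_sets (distr N M' g)"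
    using A by (simp add: null_sets_distr_iff)
qed

lemma measure_density_ge:
  assumes "finite_measure Q" "finite_measure (density Q (\<lambda>x. ennreal (h x)))"
    and h: "h \<in> borel_measurable Q" and C: "C \<in> sets Q" and ge: "\<And>x. x \<in> C \<Longrightarrow> a \<le> h x"
  shows "a * measure Q C \<le> measure (density Q (\<lambda>x. ennreal (h x))) C"
proof (cases "0 \<le> a")
  case True
  interpret Q: finite_measure Q by fact
  interpret P: finite_measure "density Q (\<lambda>x. ennreal (h x))" by fact
  have "ennreal (a * measure Q C) = (\<integral>\<^sup>+x. ennreal a * indicator C x \<partial>Q)"
    using True C by (simp add: nn_integral_cmult_indicator Q.emeasure_eq_measure ennreal_mult)
  also have "\<dots> \<le> (\<integral>\<^sup>+x. ennreal (h x) * indicator C x \<partial>Q)"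
    using ge by (intro nn_integral_mono) (auto simp: indicator_def intro: ennreal_leI)
  also have "\<dots> = ennreal (measure (density Q (\<lambda>x. ennreal (h x))) C)"
    using h C by (simp add: emeasure_density P.emeasure_eq_measure[symmetric])
  finally show ?thesis by (simp add: ennreal_le_iff[symmetric] del: ennreal_le_iff)
next
  case False
  then show ?thesis by (simp add: mult_nonpos_nonneg order.trans[OF _ measure_nonneg])
qed

lemma measure_density_le:
  assumes "finite_measure Q" and h: "h \<in> borel_measurable Q" and nonneg: "\<And>x. x \<in> space Q \<Longrightarrow> 0 \<le> h x"
    and C: "C \<in> sets Q" and le: "\<And>x. x \<in> C \<Longrightarrow> h x \<le> b"
  shows "measure (density Q (\<lambda>x. ennreal (h x))) C \<le> b * measure Q C"
proof (cases "C = {}")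
  case False
  interpret Q: finite_measure Q by fact
  have b: "0 \<le> b"
    using False le nonneg sets.sets_into_space[OF C] by (metis all_not_in_conv order.trans subsetD)
  have "emeasure (density Q (\<lambda>x. ennreal (h x))) C = (\<integral>\<^sup>+x. ennreal (h x) * indicator C x \<partial>Q)"
    using h C by (simp add: emeasure_density)
  also have "\<dots> \<le> (\<integral>\<^sup>+x. ennreal b * indicator C x \<partial>Q)"
    using le by (intro nn_integral_mono) (auto simp: indicator_def intro: ennreal_leI)
  also have "\<dots> = ennreal (b * measure Q C)"
    using b C by (simp add: nn_integral_cmult_indicator Q.emeasure_eq_measure ennreal_mult)
  finally show ?thesis
    using b by (simp add: measure_def enn2real_leI)
qed simp

lemma abs_measure_diff_density_le:
  assumes Q: "prob_space Q" and P: "prob_space (density Q (\<lambda>x. ennreal (f x)))"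
    and f: "f \<in> borel_measurable Q" and C: "C \<in> sets Q" and d: "0 < d"
  shows "\<bar>measure Q C - measure (density Q (\<lambda>x. ennreal (f x))) C\<bar>
    \<le> d + measure Q {x\<in>space Q. \<not> \<bar>f x - 1\<bar> < d}"
proof -
  interpret Q: prob_space Q by fact
  interpret P: prob_space "density Q (\<lambda>x. ennreal (f x))" by fact
  let ?P = "density Q (\<lambda>x. ennreal (f x))"
  let ?B = "{x\<in>space Q. \<not> \<bar>f x - 1\<bar> < d}"
  have one_sided: "measure Q D - measure ?P D \<le> d + measure Q ?B" if D: "D \<in> sets Q" for D
  proof -
    let ?G = "{x\<in>space Q. \<bar>f x - 1\<bar> < d}"
    have [measurable]: "?G \<in> sets Q" "?B \<in> sets Q" using f by measurable
    have "(1 - d) * measure Q (D \<inter> ?G) \<le> measure ?P (D \<inter> ?G)"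
      using f D by (intro measure_density_ge) (auto intro: P.finite_measure_axioms)
    also have "\<dots> \<le> measure ?P D"
      using D by (intro P.finite_measure_mono) auto
    finally have good: "(1 - d) * measure Q (D \<inter> ?G) \<le> measure ?P D" .
    have "measure Q D \<le> measure Q ((D \<inter> ?G) \<union> ?B)"
      using D sets.sets_into_space[OF D] by (intro Q.finite_measure_mono) auto
    also have "\<dots> \<le> measure Q (D \<inter> ?G) + measure Q ?B"
      using D by (intro measure_Un_le) auto
    finally have "measure Q D \<le> measure Q (D \<inter> ?G) + measure Q ?B" .
    moreover have "d * measure Q (D \<inter> ?G) \<le> d"
      using d by (simp add: mult_left_le)
    ultimately show ?thesis
      using good by (simp add: algebra_simps)
  qed
  have "measure ?P C - measure Q C = measure Q (space Q - C) - measure ?P (space Q - C)"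
    using C P.prob_compl[of C] Q.prob_compl[of C] by simp
  also have "\<dots> \<le> d + measure Q ?B"
    using C by (intro one_sided) auto
  finally show ?thesis
    using one_sided[OF C] by linarith
qed

lemma measure_density_deviation_le:
  assumes Q: "prob_space Q" and P: "prob_space (density Q (\<lambda>x. ennreal (h x)))"
    and h: "h \<in> borel_measurable Q" and nonneg: "\<And>x. x \<in> space Q \<Longrightarrow> 0 \<le> h x"
    and close: "\<And>C. C \<in> sets Q \<Longrightarrow> \<bar>measure Q C - measure (density Q (\<lambda>x. ennreal (h x))) C\<bar> \<le> \<delta>"
    and e: "0 < e"
  shows "measure Q {x\<in>space Q. \<not> \<bar>h x - 1\<bar> < e} \<le> 2 * \<delta> / e"
proof -
  interpret Q: prob_space Q by fact
  interpret P: prob_space "density Q (\<lambda>x. ennreal (h x))" by fact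
  let ?P = "density Q (\<lambda>x. ennreal (h x))"
  let ?above = "{x\<in>space Q. 1 + e \<le> h x}" and ?below = "{x\<in>space Q. h x \<le> 1 - e}"
  have above_sets[measurable]: "?above \<in> sets Q" and below_sets[measurable]: "?below \<in> sets Q"
    using h by measurable
  have "(1 + e) * measure Q ?above \<le> measure ?P ?above"
    using h by (intro measure_density_ge) (auto intro: P.finite_measure_axioms)
  then have "e * measure Q ?above \<le> measure ?P ?above - measure Q ?above"
    by (simp add: algebra_simps)
  with close[OF above_sets] have above: "e * measure Q ?above \<le> \<delta>"
    by linarith
  have "measure ?P ?below \<le> (1 - e) * measure Q ?below"
    using h nonneg by (intro measure_density_le) auto
  then have "e * measure Q ?below \<le> measure Q ?below - measure ?P ?below"
    by (simp add: algebra_simps)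
  with close[OF below_sets] have below: "e * measure Q ?below \<le> \<delta>"
    by linarith
  have "measure Q {x\<in>space Q. \<not> \<bar>h x - 1\<bar> < e} \<le> measure Q (?above \<union> ?below)"
    by (intro Q.finite_measure_mono) auto
  also have "\<dots> \<le> measure Q ?above + measure Q ?below"
    by (intro measure_Un_le) auto
  also have "\<dots> \<le> 2 * \<delta> / e"
    using above below e by (simp add: field_simps)
  finally show ?thesis .
qed

lemma distr_density_deviation_le:
  assumes Q: "prob_space Q" and P: "prob_space (density Q (\<lambda>x. ennreal (f x)))"
    and f: "f \<in> borel_measurable Q" and g: "g \<in> measurable Q M'"
    and h: "h \<in> borel_measurable M'" and nonneg: "\<And>y. y \<in> space M' \<Longrightarrow> 0 \<le> h y"
    and image: "distr (density Q (\<lambda>x. ennreal (f x))) M' g = density (distr Q M' g) (\<lambda>y. ennreal (h y))"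
    and d: "0 < d" and e: "0 < e"
  shows "measure (distr Q M' g) {y\<in>space M'. \<not> \<bar>h y - 1\<bar> < e}
    \<le> 2 * (d + measure Q {x\<in>space Q. \<not> \<bar>f x - 1\<bar> < d}) / e"
proof -
  let ?P = "density Q (\<lambda>x. ennreal (f x))"
  have gP: "g \<in> measurable ?P M'"
    using g by simp
  have "measure (distr Q M' g) {y\<in>space (distr Q M' g). \<not> \<bar>h y - 1\<bar> < e}
    \<le> 2 * (d + measure Q {x\<in>space Q. \<not> \<bar>f x - 1\<bar> < d}) / e"
  proof (rule measure_density_deviation_le)
    show "prob_space (distr Q M' g)"
      using prob_space.prob_space_distr[OF Q g] .
    show "prob_space (density (distr Q M' g) (\<lambda>y. ennreal (h y)))"
      using prob_space.prob_space_distr[OF P gP] unfolding image .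
    fix C assume "C \<in> sets (distr Q M' g)"
    then have C: "C \<in> sets M'" by simp
    have "\<bar>measure Q (g -` C \<inter> space Q) - measure ?P (g -` C \<inter> space Q)\<bar>
      \<le> d + measure Q {x\<in>space Q. \<not> \<bar>f x - 1\<bar> < d}"
      using measurable_sets[OF g C] by (intro abs_measure_diff_density_le[OF Q P f _ d])
    then show "\<bar>measure (distr Q M' g) C - measure (density (distr Q M' g) (\<lambda>y. ennreal (h y))) C\<bar>
      \<le> d + measure Q {x\<in>space Q. \<not> \<bar>f x - 1\<bar> < d}"
      using g gP C by (simp add: image[symmetric] measure_distr)
  qed (use h nonneg e in auto)
  then show ?thesis by simp
qed

lemma tendsto_prob_one_iff_compl_zero:
  assumes "\<And>n. prob_space (M n)" and "\<And>n. {x\<in>space (M n). P n x} \<in> sets (M n)"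
  shows "(\<lambda>n. measure (M n) {x\<in>space (M n). P n x}) \<longlonglongrightarrow> 1
    \<longleftrightarrow> (\<lambda>n. measure (M n) {x\<in>space (M n). \<not> P n x}) \<longlonglongrightarrow> 0"
proof -
  have "measure (M n) {x\<in>space (M n). \<not> P n x} = 1 - measure (M n) {x\<in>space (M n). P n x}" for n
    using prob_space.prob_neg[OF assms(1) assms(2)] by simp
  then show ?thesis
    by (simp add: tendsto_iff dist_real_def abs_minus_commute)
qed

lemma LIMSEQ_zero_if_le_vanishing:
  fixes a :: "nat \<Rightarrow> real"
  assumes nonneg: "\<And>n. 0 \<le> a n" and c: "0 < c" and b: "\<And>d. 0 < d \<Longrightarrow> b d \<longlonglongrightarrow> 0"
    and le: "\<And>d n. 0 < d \<Longrightarrow> a n \<le> c * (d + b d n)"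
  shows "a \<longlonglongrightarrow> 0"
proof (rule order_tendstoI)
  fix r :: real assume r: "0 < r"
  define d where "d = r / (4 * c)"
  have d: "0 < d" "c * (2 * d) < r"
    using r c by (simp_all add: d_def field_simps)
  have "eventually (\<lambda>n. b d n < d) sequentially"
    using order_tendstoD(2)[OF b d(1)] d(1) .
  then show "eventually (\<lambda>n. a n < r) sequentially"
  proof eventually_elim
    case (elim n)
    have "a n \<le> c * (d + b d n)" using le[OF d(1)] .
    also have "\<dots> \<le> c * (2 * d)" using elim c by (intro mult_left_mono) auto
    finally show ?case using d(2) by linarith
  qed
qed (use nonneg in \<open>auto intro: always_eventually order.strict_trans2\<close>)

lemma distr_density_eq_real_density:
  assumes Q: "prob_space Q" and P: "prob_space (density Q (\<lambda>x. ennreal (f x)))"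
    and f: "f \<in> borel_measurable Q" and g: "g \<in> measurable Q M'"
  shows "\<exists>h \<in> borel_measurable M'. (\<forall>y\<in>space M'. 0 \<le> h y)
    \<and> distr (density Q (\<lambda>x. ennreal (f x))) M' g = density (distr Q M' g) (\<lambda>y. ennreal (h y))"
proof -
  have "\<exists>h \<in> borel_measurable (distr Q M' g). (\<forall>y\<in>space (distr Q M' g). 0 \<le> h y)
    \<and> distr (density Q (\<lambda>x. ennreal (f x))) M' g = density (distr Q M' g) (\<lambda>y. ennreal (h y))"
  proof (rule real_density_if_absolutely_continuous)
    have "absolutely_continuous Q (density Q (\<lambda>x. ennreal (f x)))"
      using f by (intro absolutely_continuousI_density) simp
    then show "absolutely_continuous (distr Q M' g) (distr (density Q (\<lambda>x. ennreal (f x))) M' g)"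
      using g by (intro absolutely_continuous_distr) simp_all
  qed (use Q P g in \<open>auto simp: prob_space_imp_sigma_finite prob_space.prob_space_distr\<close>)
  then show ?thesis by simp
qed

lemma dens_conv_one_distr:
  assumes P: "\<And>n. prob_space (P n)" and Q: "\<And>n. prob_space (Q n)"
    and g: "\<And>n. g n \<in> measurable (Q n) M'" and "dens_conv_one P Q"
  shows "dens_conv_one (\<lambda>n. distr (P n) M' (g n)) (\<lambda>n. distr (Q n) M' (g n))"
proof -
  obtain f where f: "\<And>n. f n \<in> borel_measurable (Q n)"
      "\<And>n. P n = density (Q n) (\<lambda>x. ennreal (f n x))"
    and f_conv: "\<And>\<epsilon>. 0 < \<epsilon> \<Longrightarrow> (\<lambda>n. measure (Q n) {x\<in>space (Q n). \<bar>f n x - 1\<bar> < \<epsilon>}) \<longlonglongrightarrow> 1"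
    using assms(4) unfolding dens_conv_one_def by blast
  obtain h where h: "\<And>n. h n \<in> borel_measurable M'" "\<And>n y. y \<in> space M' \<Longrightarrow> 0 \<le> h n y"
      "\<And>n. distr (P n) M' (g n) = density (distr (Q n) M' (g n)) (\<lambda>y. ennreal (h n y))"
    using distr_density_eq_real_density[OF Q P[unfolded f(2)] f(1) g] unfolding f(2)[symmetric]
    by metis
  have f_tail: "(\<lambda>n. measure (Q n) {x\<in>space (Q n). \<not> \<bar>f n x - 1\<bar> < d}) \<longlonglongrightarrow> 0" if "0 < d" for d
    using f_conv[OF that] f(1) by (subst (asm) tendsto_prob_one_iff_compl_zero) (auto intro: Q)
  have h_tail: "(\<lambda>n. measure (distr (Q n) M' (g n)) {y\<in>space M'. \<not> \<bar>h n y - 1\<bar> < e}) \<longlonglongrightarrow> 0"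
    if e: "0 < e" for e
  proof (rule LIMSEQ_zero_if_le_vanishing[OF measure_nonneg _ f_tail])
    show "0 < 2 / e" using e by simp
    fix d :: real and n assume "0 < d"
    have "measure (distr (Q n) M' (g n)) {y\<in>space M'. \<not> \<bar>h n y - 1\<bar> < e}
      \<le> 2 * (d + measure (Q n) {x\<in>space (Q n). \<not> \<bar>f n x - 1\<bar> < d}) / e"
      using Q P[of n] f g h \<open>0 < d\<close> e by (intro distr_density_deviation_le) auto
    then show "measure (distr (Q n) M' (g n)) {y\<in>space M'. \<not> \<bar>h n y - 1\<bar> < e}
      \<le> 2 / e * (d + measure (Q n) {x\<in>space (Q n). \<not> \<bar>f n x - 1\<bar> < d})"
      by simp
  qed
  have h_conv: "(\<lambda>n. measure (distr (Q n) M' (g n))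
      {y\<in>space (distr (Q n) M' (g n)). \<bar>h n y - 1\<bar> < e}) \<longlonglongrightarrow> 1" if "0 < e" for e
    using h_tail[OF that] h(1) Q g
    by (subst tendsto_prob_one_iff_compl_zero) (auto intro: prob_space.prob_space_distr)
  show ?thesis
    unfolding dens_conv_one_def using h h_conv by (intro exI[of _ h]) auto
qed

theorem lemma11:
  fixes M :: "nat \<Rightarrow> 'w1 measure" and N :: "nat \<Rightarrow> 'w2 measure"
    and X :: "nat \<Rightarrow> 'w1 \<Rightarrow> 'a::polish_space" and Y :: "nat \<Rightarrow> 'w2 \<Rightarrow> 'a"
    and g :: "nat \<Rightarrow> 'a \<Rightarrow> 'b::polish_space"
  assumes "\<And>n. prob_space (M n)" and "\<And>n. prob_space (N n)"
    and "\<And>n. X n \<in> borel_measurable (M n)" and "\<And>n. Y n \<in> borel_measurable (N n)"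
    and "\<And>n. continuous_on UNIV (g n)"
    and "ratio_conv_one M X N Y"
  shows "ratio_conv_one M (\<lambda>n \<omega>. g n (X n \<omega>)) N (\<lambda>n \<omega>. g n (Y n \<omega>))"
proof -
  have g: "g n \<in> borel_measurable borel" for n
    using assms(5) by (rule borel_measurable_continuous_onI)
  have "dens_conv_one (\<lambda>n. distr (distr (M n) borel (X n)) borel (g n))
                      (\<lambda>n. distr (distr (N n) borel (Y n)) borel (g n))"
    using assms(1-4,6) g unfolding ratio_conv_one_def
    by (intro dens_conv_one_distr) (auto intro: prob_space.prob_space_distr)
  then show ?thesis
    unfolding ratio_conv_one_def using g assms(3,4) by (simp add: distr_distr comp_def)
qed

end
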